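(* Let $\mu^+_1,\mu^-_1,\mu^+_2,\mu^-_2\in\Lambda$ satisfy $\alpha^\vee_i(\mu^+_1)=\alpha^\vee_i(\mu^+_2)$ and $\alpha^\vee_i(\mu^-_1)=\alpha^\vee_i(\mu^-_2)$ for all $1\le i\le n-1$. Then the assignment $$E_{i,r}\mapsto E_{i,r},\quad F_{i,r}\mapsto F_{i,r},\quad \varphi^\pm_{i,\pm s}\mapsto\varphi^\pm_{i,\pm s\mp\epsilon^\vee_i(\mu^\pm_1-\mu^\pm_2)}$$ gives rise to a $\mathbb{C}(v)$-algebra isomorphism $U_{\mu^+_1,\mu^-_1}(L\mathfrak{gl}_n)\xrightarrow{\sim}U_{\mu^+_2,\mu^-_2}(L\mathfrak{gl}_n)$.
   Context: Let $n\ge2$, $\Lambda=\bigoplus_{j=1}^n\mathbb{Z}\epsilon_j$, $\epsilon^\vee_j$ dual basis, $\alpha^\vee_i=\epsilon^\vee_i-\epsilon^\vee_{i+1}$. For $\nu^+,\nu^-\in\Lambda$ put $d^\pm_j:=\epsilon^\vee_j(\nu^\pm)$. $U_{\nu^+,\nu^-}(L\mathfrak{gl}_n)$ is the associative $\mathbb{C}(v)$-algebra generated by $E_{i,r},F_{i,r}$ ($1\le i<n$, $r\in\mathbb{Z}$), $\varphi^\pm_{i,\pm s}$ ($1\le i\le n$, $s\ge d^\pm_i$) and $(\varphi^\pm_{i,\pm d^\pm_i})^{-1}$, with generating series $E_i(z)=\sum_{r\in\mathbb{Z}}E_{i,r}z^{-r}$, $F_i(z)=\sum_rF_{i,r}z^{-r}$,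 $\varphi^\pm_i(z)=\sum_{r\ge d^\pm_i}\varphi^\pm_{i,\pm r}z^{\mp r}$, $\delta(z)=\sum_{r\in\mathbb{Z}}z^r$, and defining relations (for all $i,j$, $\epsilon,\epsilon'\in\{\pm\}$; relations involving rational functions are understood after multiplying by denominators; $[a,b]_x:=ab-xba$): (U0) $[\varphi^\epsilon_i(z),\varphi^{\epsilon'}_j(w)]=0$, $\varphi^\pm_{i,\pm d^\pm_i}(\varphi^\pm_{i,\pm d^\pm_i})^{-1}=(\varphi^\pm_{i,\pm d^\pm_i})^{-1}\varphi^\pm_{i,\pm d^\pm_i}=1$; (U1) $[E_i(z),F_j(w)]=(v-v^{-1})\delta_{ij}\delta(z/w)\big(\varphi^+_i(z)^{-1}\varphi^+_{i+1}(z)-\varphi^-_i(z)^{-1}\varphi^-_{i+1}(z)\big)$; (U2) $\varphi^\epsilon_i(z)E_j(w)=\big(\frac{z-w}{v^{-1}z-vw}\big)^{\delta_{i,j+1}}\big(\frac{z-w}{vz-v^{-1}w}\big)^{\delta_{i,j}}E_j(w)\varphi^\epsilon_i(z)$; (U3) $\varphi^\epsilon_i(z)F_j(w)=\big(\frac{v^{-1}z-vw}{z-w}\big)^{\delta_{i,j+1}}\big(\frac{vz-v^{-1}w}{z-w}\big)^{\delta_{i,j}}F_j(w)\varphi^\epsilon_i(z)$; (U4) $E_i(z)E_j(w)=\big(\frac{vz-v^{-1}w}{v^{-1}z-vw}\big)^{\delta_{ij}}\big(\frac{z-w}{vz-v^{-1}w}\big)^{\delta_{i,j-1}}\big(\frac{v^{-1}z-vw}{z-w}\big)^{\delta_{i,j+1}}E_j(w)E_i(z)$;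 (U5) $F_i(z)F_j(w)=\big(\frac{v^{-1}z-vw}{vz-v^{-1}w}\big)^{\delta_{ij}}\big(\frac{vz-v^{-1}w}{z-w}\big)^{\delta_{i,j-1}}\big(\frac{z-w}{v^{-1}z-vw}\big)^{\delta_{i,j+1}}F_j(w)F_i(z)$; (U6),(U7) for $|i-j|=1$: $[E_i(z_1),[E_i(z_2),E_j(w)]_v]_{v^{-1}}+[E_i(z_2),[E_i(z_1),E_j(w)]_v]_{v^{-1}}=0$, and the same with $F$ in place of $E$. *)

theory Defs
  imports "HOL-Library.Poly_Mapping" "HOL-Computational_Algebra.Polynomial"
          "HOL-Computational_Algebra.Fraction_Field"
begin

type_synonym K = "complex poly fract"

definition qv :: K where "qv = Fract [:0, 1:] 1"

(* Generators:
   GE i r = E_{i,r};  GF i r = F_{i,r};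
   GPhi True i s  = phi^+_{i,s}   (coefficient of z^{-s} in phi^+_i(z));
   GPhi False i s = phi^-_{i,-s}  (coefficient of z^{s}  in phi^-_i(z));
   GPhiInv b i = (phi^{+/-}_{i,+/-d^{+/-}_i})^{-1}. *)
datatype gen = GE nat int | GF nat int | GPhi bool nat int | GPhiInv bool nat

(* free associative C(v)-algebra on gen: finitely supported functions on words *)
type_synonym FA = "gen list \<Rightarrow>\<^sub>0 K"

definition fmul :: "FA \<Rightarrow> FA \<Rightarrow> FA" (infixl "\<odot>" 70) where
  "p \<odot> q = (\<Sum>a\<in>Poly_Mapping.keys p. \<Sum>b\<in>Poly_Mapping.keys q. Poly_Mapping.single (a @ b) (Poly_Mapping.lookup p a * Poly_Mapping.lookup q b))"

definition fone :: FA where "fone = Poly_Mapping.single [] 1"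

definition sc :: "K \<Rightarrow> FA" where "sc c = Poly_Mapping.single [] c"

definition gen :: "gen \<Rightarrow> FA" where "gen g = Poly_Mapping.single [g] 1"

inductive_set ideal_of :: "FA set \<Rightarrow> FA set" for R where
  zero: "0 \<in> ideal_of R"
| gen_rel: "r \<in> R \<Longrightarrow> a \<odot> r \<odot> b \<in> ideal_of R"
| add: "x \<in> ideal_of R \<Longrightarrow> y \<in> ideal_of R \<Longrightarrow> x + y \<in> ideal_of R"

fun word_eval :: "(gen \<Rightarrow> FA) \<Rightarrow> gen list \<Rightarrow> FA" where
  "word_eval \<sigma> [] = fone"
| "word_eval \<sigma> (g # w) = \<sigma> g \<odot> word_eval \<sigma> w"

definition hom_of :: "(gen \<Rightarrow> FA) \<Rightarrow> FA \<Rightarrow> FA" where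
  "hom_of \<sigma> p = (\<Sum>w\<in>Poly_Mapping.keys p. sc (Poly_Mapping.lookup p w) \<odot> word_eval \<sigma> w)"

(* The algebra homomorphism hom_of sigma : Free/ideal_of R1 -> Free/ideal_of R2
   is well defined, injective and surjective. *)
definition induces_iso :: "(gen \<Rightarrow> FA) \<Rightarrow> FA set \<Rightarrow> FA set \<Rightarrow> bool" where
  "induces_iso \<sigma> R1 R2 \<longleftrightarrow>
     (\<forall>p. p \<in> ideal_of R1 \<longrightarrow> hom_of \<sigma> p \<in> ideal_of R2) \<and>
     (\<forall>p. hom_of \<sigma> p \<in> ideal_of R2 \<longrightarrow> p \<in> ideal_of R1) \<and>
     (\<forall>q. \<exists>p. q - hom_of \<sigma> p \<in> ideal_of R2)"

(* weights nu in Lambda = Z^n are given by j \<mapsto> epsilon_j^vee(nu), j = 1..n *)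
definition dd :: "(nat \<Rightarrow> int) \<Rightarrow> (nat \<Rightarrow> int) \<Rightarrow> bool \<Rightarrow> nat \<Rightarrow> int" where
  "dd dp dm b i = (if b then dp i else dm i)"

definition valid_gen :: "nat \<Rightarrow> (nat \<Rightarrow> int) \<Rightarrow> (nat \<Rightarrow> int) \<Rightarrow> gen \<Rightarrow> bool" where
  "valid_gen n dp dm g = (case g of
      GE i r \<Rightarrow> 1 \<le> i \<and> i < n
    | GF i r \<Rightarrow> 1 \<le> i \<and> i < n
    | GPhi b i s \<Rightarrow> 1 \<le> i \<and> i \<le> n \<and> dd dp dm b i \<le> s
    | GPhiInv b i \<Rightarrow> 1 \<le> i \<and> i \<le> n)"

(* coefficient of t^k in phi^b_i, where t = z^{-1} for b = True, t = z for b = False *)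
definition cf :: "(nat \<Rightarrow> int) \<Rightarrow> (nat \<Rightarrow> int) \<Rightarrow> bool \<Rightarrow> nat \<Rightarrow> int \<Rightarrow> FA" where
  "cf dp dm b i k = (if dd dp dm b i \<le> k then gen (GPhi b i k) else 0)"

(* coefficient of z^{-k} in phi^b_i(z) *)
definition phiz :: "(nat \<Rightarrow> int) \<Rightarrow> (nat \<Rightarrow> int) \<Rightarrow> bool \<Rightarrow> nat \<Rightarrow> int \<Rightarrow> FA" where
  "phiz dp dm b i k = (if b then cf dp dm True i k else cf dp dm False i (- k))"

(* coefficients p_0..p_m of the inverse series psi = sum_m p_m t^{-d+m} of
   phi = sum_{l>=0} c(d+l) t^{d+l}, with p_0 = ainv = c(d)^{-1} and
   p_M = - ainv * sum_{l=1}^M c(d+l) p_{M-l} *)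
primrec psi_list :: "(int \<Rightarrow> FA) \<Rightarrow> int \<Rightarrow> FA \<Rightarrow> nat \<Rightarrow> FA list" where
  "psi_list c d ainv 0 = [ainv]"
| "psi_list c d ainv (Suc m) =
     (let ps = psi_list c d ainv m
      in ps @ [- (ainv \<odot> (\<Sum>l\<in>{1..Suc m}. c (d + int l) \<odot> (ps ! (Suc m - l))))])"

definition psi :: "(int \<Rightarrow> FA) \<Rightarrow> int \<Rightarrow> FA \<Rightarrow> nat \<Rightarrow> FA" where
  "psi c d ainv m = psi_list c d ainv m ! m"

(* coefficient of t^k in phi^b_i(z)^{-1} phi^b_{i+1}(z) *)
definition GG :: "(nat \<Rightarrow> int) \<Rightarrow> (nat \<Rightarrow> int) \<Rightarrow> bool \<Rightarrow> nat \<Rightarrow> int \<Rightarrow> FA" where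
  "GG dp dm b i k =
     (let N = k + dd dp dm b i - dd dp dm b (i + 1) in
      if N < 0 then 0 else
      (\<Sum>m\<in>{0..nat N}.
          psi (cf dp dm b i) (dd dp dm b i) (gen (GPhiInv b i)) m
          \<odot> cf dp dm b (i + 1) (dd dp dm b (i + 1) + int (nat N - m))))"

(* coefficient of z^{-k} in phi^+_i(z)^{-1}phi^+_{i+1}(z) - phi^-_i(z)^{-1}phi^-_{i+1}(z) *)
definition Hc :: "(nat \<Rightarrow> int) \<Rightarrow> (nat \<Rightarrow> int) \<Rightarrow> nat \<Rightarrow> int \<Rightarrow> FA" where
  "Hc dp dm i k = GG dp dm True i k - GG dp dm False i (- k)"

(* coefficient of z^{-k} w^{-l} in (a z + b w) X(z) Y(w) - (c z + d w) Y(w) X(z) *)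
definition brel :: "K \<Rightarrow> K \<Rightarrow> K \<Rightarrow> K \<Rightarrow> (int \<Rightarrow> FA) \<Rightarrow> (int \<Rightarrow> FA) \<Rightarrow> int \<Rightarrow> int \<Rightarrow> FA" where
  "brel a b c d X Y k l =
     sc a \<odot> X (k + 1) \<odot> Y l + sc b \<odot> X k \<odot> Y (l + 1)
     - sc c \<odot> Y l \<odot> X (k + 1) - sc d \<odot> Y (l + 1) \<odot> X k"

definition qcomm :: "FA \<Rightarrow> FA \<Rightarrow> K \<Rightarrow> FA" where
  "qcomm x y q = x \<odot> y - sc q \<odot> y \<odot> x"

definition serre :: "FA \<Rightarrow> FA \<Rightarrow> FA \<Rightarrow> FA" where
  "serre a b c = qcomm a (qcomm b c qv) (inverse qv)"

definition EE :: "nat \<Rightarrow> int \<Rightarrow> FA" where "EE i r = gen (GE i r)"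
definition FF :: "nat \<Rightarrow> int \<Rightarrow> FA" where "FF i r = gen (GF i r)"

(* coefficients (a,b,c,d) for (U2): (a z + b w) phi_i(z) E_j(w) = (c z + d w) E_j(w) phi_i(z) *)
definition cU2 :: "nat \<Rightarrow> nat \<Rightarrow> K \<times> K \<times> K \<times> K" where
  "cU2 i j = (if i = j + 1 then (inverse qv, - qv, 1, -1)
              else if i = j then (qv, - inverse qv, 1, -1) else (1, 0, 1, 0))"
definition cU3 :: "nat \<Rightarrow> nat \<Rightarrow> K \<times> K \<times> K \<times> K" where
  "cU3 i j = (if i = j + 1 then (1, -1, inverse qv, - qv)
              else if i = j then (1, -1, qv, - inverse qv) else (1, 0, 1, 0))"
definition cU4 :: "nat \<Rightarrow> nat \<Rightarrow> K \<times> K \<times> K \<times> K" where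
  "cU4 i j = (if i = j then (inverse qv, - qv, qv, - inverse qv)
              else if j = i + 1 then (qv, - inverse qv, 1, -1)
              else if i = j + 1 then (1, -1, inverse qv, - qv) else (1, 0, 1, 0))"
definition cU5 :: "nat \<Rightarrow> nat \<Rightarrow> K \<times> K \<times> K \<times> K" where
  "cU5 i j = (if i = j then (qv, - inverse qv, inverse qv, - qv)
              else if j = i + 1 then (1, -1, qv, - inverse qv)
              else if i = j + 1 then (inverse qv, - qv, 1, -1) else (1, 0, 1, 0))"

definition brel4 :: "K \<times> K \<times> K \<times> K \<Rightarrow> (int \<Rightarrow> FA) \<Rightarrow> (int \<Rightarrow> FA) \<Rightarrow> int \<Rightarrow> int \<Rightarrow> FA" where
  "brel4 q X Y k l = (case q of (a, b, c, d) \<Rightarrow> brel a b c d X Y k l)"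

definition rels :: "nat \<Rightarrow> (nat \<Rightarrow> int) \<Rightarrow> (nat \<Rightarrow> int) \<Rightarrow> FA set" where
  "rels n dp dm =
     {gen g | g. \<not> valid_gen n dp dm g}
   \<union> {gen (GPhi b i k) \<odot> gen (GPhi b' j l) - gen (GPhi b' j l) \<odot> gen (GPhi b i k)
       | b b' i j k l. 1 \<le> i \<and> i \<le> n \<and> 1 \<le> j \<and> j \<le> n}
   \<union> {gen (GPhi b i (dd dp dm b i)) \<odot> gen (GPhiInv b i) - fone | b i. 1 \<le> i \<and> i \<le> n}
   \<union> {gen (GPhiInv b i) \<odot> gen (GPhi b i (dd dp dm b i)) - fone | b i. 1 \<le> i \<and> i \<le> n}
   \<union> {EE i r \<odot> FF j s - FF j s \<odot> EE i r
        - (if i = j then sc (qv - inverse qv) \<odot> Hc dp dm i (r + s) else 0)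
       | i j r s. 1 \<le> i \<and> i < n \<and> 1 \<le> j \<and> j < n}
   \<union> {brel4 (cU2 i j) (phiz dp dm b i) (EE j) k l
       | b i j k l. 1 \<le> i \<and> i \<le> n \<and> 1 \<le> j \<and> j < n}
   \<union> {brel4 (cU3 i j) (phiz dp dm b i) (FF j) k l
       | b i j k l. 1 \<le> i \<and> i \<le> n \<and> 1 \<le> j \<and> j < n}
   \<union> {brel4 (cU4 i j) (EE i) (EE j) k l
       | i j k l. 1 \<le> i \<and> i < n \<and> 1 \<le> j \<and> j < n}
   \<union> {brel4 (cU5 i j) (FF i) (FF j) k l
       | i j k l. 1 \<le> i \<and> i < n \<and> 1 \<le> j \<and> j < n}
   \<union> {serre (EE i r1) (EE i r2) (EE j s) + serre (EE i r2) (EE i r1) (EE j s)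
       | i j r1 r2 s. 1 \<le> i \<and> i < n \<and> 1 \<le> j \<and> j < n \<and> (i = j + 1 \<or> j = i + 1)}
   \<union> {serre (FF i r1) (FF i r2) (FF j s) + serre (FF i r2) (FF i r1) (FF j s)
       | i j r1 r2 s. 1 \<le> i \<and> i < n \<and> 1 \<le> j \<and> j < n \<and> (i = j + 1 \<or> j = i + 1)}"

definition alpha_cw :: "nat \<Rightarrow> (nat \<Rightarrow> int) \<Rightarrow> int" where
  "alpha_cw i \<mu> = \<mu> i - \<mu> (i + 1)"

fun shift_gen :: "(nat \<Rightarrow> int) \<Rightarrow> (nat \<Rightarrow> int) \<Rightarrow> (nat \<Rightarrow> int) \<Rightarrow> (nat \<Rightarrow> int) \<Rightarrow> gen \<Rightarrow> gen" where
  "shift_gen mp1 mm1 mp2 mm2 (GPhi True i s) = GPhi True i (s - (mp1 i - mp2 i))"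
| "shift_gen mp1 mm1 mp2 mm2 (GPhi False i s) = GPhi False i (s - (mm1 i - mm2 i))"
| "shift_gen mp1 mm1 mp2 mm2 g = g"

end

theory Submission
  imports Defs
begin

(* The assignment permutes the generators: it only re-indexes the coefficients of phi^+-_i, and the
   opposite shift undoes it. A permutation of the generators extends to an automorphism of the free
   algebra, so it suffices that it maps every defining relation for (mu1+, mu1-) to a defining
   relation for (mu2+, mu2-), and conversely. The truncation conditions s >= d_i and the
   invertibility relations move along with the shift; in (U2) and (U3) the shift is absorbed by
   re-indexing the power of z; and the coefficients of phi_i(z)^-1 phi_(i+1)(z) in (U1) depend on
   the weight only through d_i - d_(i+1) = alpha_i(mu), which is the same for mu1 and mu2. *)

lemma fmul_single_single:
  "Poly_Mapping.single a x \<odot> Poly_Mapping.single b y = Poly_Mapping.single (a @ b) (x * y)"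
  by (cases "x = 0"; cases "y = 0") (simp_all add: fmul_def)

lemma lookup_fmul:
  "Poly_Mapping.lookup (p \<odot> q) w =
     (\<Sum>a\<in>Poly_Mapping.keys p. \<Sum>b\<in>Poly_Mapping.keys q.
        if a @ b = w then Poly_Mapping.lookup p a * Poly_Mapping.lookup q b else 0)"
  by (simp add: fmul_def lookup_sum lookup_single when_def)

lemma brel_shift_left: "brel a b c d (\<lambda>m. X (m + e)) Y k l = brel a b c d X Y (k + e) l"
  by (simp add: brel_def ac_simps)

lemma brel4_shift_left: "brel4 q (\<lambda>m. X (m + e)) Y k l = brel4 q X Y (k + e) l"
  by (cases q) (simp add: brel4_def brel_shift_left)

locale gen_renaming =
  fixes f g :: "gen \<Rightarrow> gen"
  assumes f_g [simp]: "f (g x) = x" and g_f [simp]: "g (f x) = x"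
begin

definition ren :: "FA \<Rightarrow> FA" where "ren = hom_of (\<lambda>x. gen (f x))"

lemma word_eval_ren: "word_eval (\<lambda>x. gen (f x)) w = Poly_Mapping.single (map f w) 1"
  by (induction w) (simp_all add: fone_def gen_def fmul_single_single)

lemma g_comp_f [simp]: "g \<circ> f = id"
  by (simp add: fun_eq_iff)

lemma f_comp_g [simp]: "f \<circ> g = id"
  by (simp add: fun_eq_iff)

lemma map_f_eq_iff: "map f v = w \<longleftrightarrow> v = map g w"
  by auto

lemma lookup_ren: "Poly_Mapping.lookup (ren p) w = Poly_Mapping.lookup p (map g w)"
proof -
  have "Poly_Mapping.lookup (ren p) w =
      (\<Sum>v\<in>Poly_Mapping.keys p. if v = map g w then Poly_Mapping.lookup p v else 0)"
    by (simp add: ren_def hom_of_def word_eval_ren sc_def fmul_single_single lookup_sum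
        lookup_single when_def map_f_eq_iff)
  also have "\<dots> = Poly_Mapping.lookup p (map g w)"
    by (simp add: sum.delta in_keys_iff)
  finally show ?thesis .
qed

lemma keys_ren: "Poly_Mapping.keys (ren p) = map f ` Poly_Mapping.keys p"
proof -
  have "w \<in> map f ` Poly_Mapping.keys p \<longleftrightarrow> map g w \<in> Poly_Mapping.keys p" for w
    by (metis (no_types, lifting) image_iff map_f_eq_iff)
  then show ?thesis by (auto simp: in_keys_iff lookup_ren)
qed

lemma ren_fmul [simp]: "ren (p \<odot> q) = ren p \<odot> ren q"
proof (rule poly_mapping_eqI)
  fix w
  have inj_map_f: "inj_on (map f) A" for A
    by (metis inj_onI map_f_eq_iff)
  have "Poly_Mapping.lookup (ren p \<odot> ren q) w =
      (\<Sum>a\<in>Poly_Mapping.keys p. \<Sum>b\<in>Poly_Mapping.keys q.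
         if map f a @ map f b = w then Poly_Mapping.lookup p a * Poly_Mapping.lookup q b else 0)"
    by (simp only: lookup_fmul keys_ren sum.reindex[OF inj_map_f] comp_def lookup_ren map_map g_f map_ident)
  also have "\<dots> = Poly_Mapping.lookup (p \<odot> q) (map g w)"
    by (simp add: lookup_fmul map_f_eq_iff[symmetric])
  finally show "Poly_Mapping.lookup (ren (p \<odot> q)) w = Poly_Mapping.lookup (ren p \<odot> ren q) w"
    by (simp add: lookup_ren)
qed

lemma ren_add [simp]: "ren (p + q) = ren p + ren q"
  by (rule poly_mapping_eqI) (simp add: lookup_ren lookup_add)

lemma ren_diff [simp]: "ren (p - q) = ren p - ren q"
  by (rule poly_mapping_eqI) (simp add: lookup_ren lookup_minus)

lemma ren_uminus [simp]: "ren (- p) = - ren p"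
  by (rule poly_mapping_eqI) (simp add: lookup_ren)

lemma ren_zero [simp]: "ren 0 = 0"
  by (rule poly_mapping_eqI) (simp add: lookup_ren)

lemma ren_sum [simp]: "ren (sum P A) = (\<Sum>x\<in>A. ren (P x))"
  by (rule poly_mapping_eqI) (simp add: lookup_ren lookup_sum)

lemma ren_sc [simp]: "ren (sc c) = sc c"
  by (rule poly_mapping_eqI) (simp add: lookup_ren sc_def lookup_single when_def)

lemma ren_fone [simp]: "ren fone = fone"
  by (rule poly_mapping_eqI) (simp add: lookup_ren fone_def lookup_single when_def)

lemma ren_gen [simp]: "ren (gen x) = gen (f x)"
  by (rule poly_mapping_eqI) (auto simp: lookup_ren gen_def lookup_single when_def)

lemma ren_brel4 [simp]: "ren (brel4 q X Y k l) = brel4 q (\<lambda>m. ren (X m)) (\<lambda>m. ren (Y m)) k l"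
  by (cases q) (simp add: brel4_def brel_def)

lemma ren_serre [simp]: "ren (serre a b c) = serre (ren a) (ren b) (ren c)"
  by (simp add: serre_def qcomm_def)

lemma ren_psi:
  assumes "\<And>l. ren (c (d + int l)) = c' (d' + int l)"
  shows "ren (psi c d a m) = psi c' d' (ren a) m"
proof -
  have length_psi_list: "length (psi_list c d a m) = Suc m" for c d a m
    by (induction m) (simp_all add: Let_def)
  have "map ren (psi_list c d a m) = psi_list c' d' (ren a) m"
  proof (induction m)
    case (Suc m)
    have ren_nth: "ren (psi_list c d a m ! (Suc m - l)) = psi_list c' d' (ren a) m ! (Suc m - l)"
      if "l \<in> {1..Suc m}" for l
      using that Suc nth_map[of "Suc m - l" "psi_list c d a m" ren] by (simp add: length_psi_list)
    have "ren (\<Sum>l\<in>{1..Suc m}. c (d + int l) \<odot> psi_list c d a m ! (Suc m - l)) =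
        (\<Sum>l\<in>{1..Suc m}. c' (d' + int l) \<odot> psi_list c' d' (ren a) m ! (Suc m - l))"
      unfolding ren_sum ren_fmul assms by (rule sum.cong) (simp_all add: ren_nth)
    with Suc show ?case
      by (simp only: psi_list.simps Let_def list.map map_append ren_uminus ren_fmul)
  qed simp
  then show ?thesis
    by (metis length_psi_list lessI nth_map psi_def)
qed

lemma ren_ideal_of:
  assumes "ren ` R1 \<subseteq> R2" and "p \<in> ideal_of R1"
  shows "ren p \<in> ideal_of R2"
  using assms(2)
  by induction (use assms(1) in \<open>auto intro: ideal_of.intros\<close>)

lemma ren_inverse: "hom_of (\<lambda>x. gen (g x)) (ren p) = p"
proof -
  interpret inv: gen_renaming g f by unfold_locales simp_all
  show ?thesis
    by (rule poly_mapping_eqI) (simp add: inv.ren_def[symmetric] inv.lookup_ren lookup_ren comp_def)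
qed

lemma induces_iso_ren:
  assumes "ren ` R1 \<subseteq> R2" and "hom_of (\<lambda>x. gen (g x)) ` R2 \<subseteq> R1"
  shows "induces_iso (\<lambda>x. gen (f x)) R1 R2"
proof -
  interpret inv: gen_renaming g f by unfold_locales simp_all
  have "p \<in> ideal_of R1" if "ren p \<in> ideal_of R2" for p
    using inv.ren_ideal_of[OF _ that] assms(2) by (simp add: inv.ren_def ren_inverse)
  moreover have "q - ren (inv.ren q) \<in> ideal_of R2" for q
    using inv.ren_inverse[of q] by (simp add: ren_def ideal_of.zero)
  ultimately show ?thesis
    using ren_ideal_of[OF assms(1)] by (auto simp: induces_iso_def ren_def[symmetric])
qed

end

lemma shift_gen_GPhi:
  "shift_gen mp1 mm1 mp2 mm2 (GPhi b i s) = GPhi b i (s - (dd mp1 mm1 b i - dd mp2 mm2 b i))"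
  by (cases b) (simp_all add: dd_def)

lemma valid_gen_shift_gen:
  "valid_gen n mp2 mm2 (shift_gen mp1 mm1 mp2 mm2 x) \<longleftrightarrow> valid_gen n mp1 mm1 x"
  by (cases x) (auto simp: valid_gen_def shift_gen_GPhi)

locale weight_shift =
  fixes n :: nat and mp1 mm1 mp2 mm2 :: "nat \<Rightarrow> int"
  assumes alpha_plus: "\<forall>i. 1 \<le> i \<and> i \<le> n - 1 \<longrightarrow> alpha_cw i mp1 = alpha_cw i mp2"
    and alpha_minus: "\<forall>i. 1 \<le> i \<and> i \<le> n - 1 \<longrightarrow> alpha_cw i mm1 = alpha_cw i mm2"
begin

sublocale gen_renaming "shift_gen mp1 mm1 mp2 mm2" "shift_gen mp2 mm2 mp1 mm1"
proof
  fix x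
  show "shift_gen mp1 mm1 mp2 mm2 (shift_gen mp2 mm2 mp1 mm1 x) = x"
    and "shift_gen mp2 mm2 mp1 mm1 (shift_gen mp1 mm1 mp2 mm2 x) = x"
    by (cases x; simp add: shift_gen_GPhi)+
qed

abbreviation \<delta> :: "bool \<Rightarrow> nat \<Rightarrow> int" where
  "\<delta> b i \<equiv> dd mp1 mm1 b i - dd mp2 mm2 b i"

lemma ren_cf: "ren (cf mp1 mm1 b i k) = cf mp2 mm2 b i (k - \<delta> b i)"
  by (simp add: cf_def shift_gen_GPhi)

lemma ren_phiz [simp]:
  "ren (phiz mp1 mm1 b i k) = phiz mp2 mm2 b i (k + (if b then - \<delta> b i else \<delta> b i))"
  by (cases b) (simp_all add: phiz_def ren_cf algebra_simps)

lemma ren_EE [simp]: "ren (EE i r) = EE i r"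
  by (simp add: EE_def)

lemma ren_FF [simp]: "ren (FF i r) = FF i r"
  by (simp add: FF_def)

lemma dd_diff_eq:
  assumes "1 \<le> i" "i < n"
  shows "dd mp1 mm1 b i - dd mp1 mm1 b (i + 1) = dd mp2 mm2 b i - dd mp2 mm2 b (i + 1)"
  using alpha_plus alpha_minus assms by (cases b) (auto simp: dd_def alpha_cw_def)

lemma ren_GG:
  assumes "1 \<le> i" "i < n"
  shows "ren (GG mp1 mm1 b i k) = GG mp2 mm2 b i k"
proof -
  have index_eq: "k + dd mp1 mm1 b i - dd mp1 mm1 b (i + 1) = k + dd mp2 mm2 b i - dd mp2 mm2 b (i + 1)"
    using dd_diff_eq[OF assms] by simp
  have "ren (cf mp1 mm1 b j (dd mp1 mm1 b j + l)) = cf mp2 mm2 b j (dd mp2 mm2 b j + l)" for j l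
    by (simp add: ren_cf add.commute)
  then show ?thesis
    unfolding GG_def Let_def index_eq
    by (simp add: ren_psi[where c' = "cf mp2 mm2 b i" and d' = "dd mp2 mm2 b i"])
qed

lemma ren_Hc [simp]:
  assumes "1 \<le> i" "i < n"
  shows "ren (Hc mp1 mm1 i k) = Hc mp2 mm2 i k"
  by (simp add: Hc_def ren_GG[OF assms])

lemma ren_rels: "ren ` rels n mp1 mm1 \<subseteq> rels n mp2 mm2"
  unfolding rels_def image_Un
  apply (intro Un_mono; rule image_subsetI; elim CollectE exE conjE; hypsubst)
  apply (simp_all only: ren_diff ren_add ren_fmul ren_gen ren_fone ren_sc ren_zero ren_EE ren_FF
      if_distrib[of ren] ren_Hc ren_brel4 ren_phiz ren_serre brel4_shift_left
      shift_gen_GPhi shift_gen.simps diff_diff_eq2 add_diff_cancel_left')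
  apply (blast dest: valid_gen_shift_gen[THEN iffD1])+
  done

end

theorem lemma3p2:
  fixes n :: nat and mp1 mm1 mp2 mm2 :: "nat \<Rightarrow> int"
  assumes "n \<ge> 2"
    and "\<forall>i. 1 \<le> i \<and> i \<le> n - 1 \<longrightarrow> alpha_cw i mp1 = alpha_cw i mp2"
    and "\<forall>i. 1 \<le> i \<and> i \<le> n - 1 \<longrightarrow> alpha_cw i mm1 = alpha_cw i mm2"
  shows "induces_iso (\<lambda>g. gen (shift_gen mp1 mm1 mp2 mm2 g))
           (rels n mp1 mm1) (rels n mp2 mm2)"
proof -
  interpret forward: weight_shift n mp1 mm1 mp2 mm2
    using assms(2,3) by unfold_locales
  interpret backward: weight_shift n mp2 mm2 mp1 mm1
    using assms(2,3) by unfold_locales auto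
  show ?thesis
    using forward.induces_iso_ren forward.ren_rels backward.ren_rels
    by (simp add: backward.ren_def)
qed

end
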